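(* Let $q=p^m$ with $p$ an odd prime, $q\equiv 1\pmod 3$ and $q\geq 13$. Let $\pi,\sigma\in P$. Then $hd(\pi^{\triangle},\sigma^{\triangle})=hd(\pi,\sigma)-3$ if and only if $\pi\sigma$ is an edge of $C_P(q)$.
   Context: $PGL(2,q)$ is the group of maps $x\mapsto\frac{ax+b}{cx+d}$ ($a,b,c,d\in GF(q)$, $ad\neq bc$) acting on $GF(q)\cup\{\infty\}$ with the usual conventions ($-d/c\mapsto\infty$, $\infty\mapsto a/c$ if $c\neq0$, $\infty\mapsto\infty$ if $c=0$). For $K,i\in GF(q)$ and $r\in GF(q)\setminus\{0\}$, $f_{K,r,i}$ is the element of $PGL(2,q)$ with $f_{K,r,i}(x)=K+\frac{r}{x-i}$ for $x\notin\{i,\infty\}$, $f_{K,r,i}(\infty)=K$, $f_{K,r,i}(i)=\infty$; $P$ is the set of all such $f_{K,r,i}$. $hd(\pi,\sigma)$ is the number of points at which $\pi,\sigma$ differ. With distinguished element $F=\infty$, $\pi^{\triangle}$ is the permutation with $\pi^{\triangle}(\pi^{-1}(\infty))=\pi(\infty)$, $\pi^{\triangle}(\infty)=\infty$, $\pi^{\triangle}(x)=\pi(x)$ otherwise. The contraction graph $C_P(q)$ has vertex set $PGL(2,q)$, with distinct $\pi,\sigma$ adjacent iff $hd(\pi^{\triangle},\sigma^{\triangle})=q-4$. *)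

theory Defs
  imports "HOL-Library.Cardinality" "HOL-Computational_Algebra.Primes"
begin

text \<open>The projective line GF(q) \<union> {\<infinity>} is modelled as 'a option, with None = \<infinity>.
  The finite field GF(q) is an arbitrary finite field type 'a with CARD('a) = q.\<close>

definition mobius :: "'a::field \<Rightarrow> 'a \<Rightarrow> 'a \<Rightarrow> 'a \<Rightarrow> 'a option \<Rightarrow> 'a option" where
  "mobius a b c d x = (case x of
      None \<Rightarrow> (if c = 0 then None else Some (a / c))
    | Some y \<Rightarrow> (if c * y + d = 0 then None else Some ((a * y + b) / (c * y + d))))"

definition PGL2 :: "('a::field option \<Rightarrow> 'a option) set" where
  "PGL2 = {mobius a b c d | a b c d. a * d \<noteq> b * c}"

definition fKri :: "'a::field \<Rightarrow> 'a \<Rightarrow> 'a \<Rightarrow> 'a option \<Rightarrow> 'a option" where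
  "fKri K r i x = (case x of
      None \<Rightarrow> Some K
    | Some y \<Rightarrow> (if y = i then None else Some (K + r / (y - i))))"

definition Pset :: "('a::field option \<Rightarrow> 'a option) set" where
  "Pset = {fKri K r i | K r i. r \<noteq> 0}"

definition hd :: "('a option \<Rightarrow> 'a option) \<Rightarrow> ('a option \<Rightarrow> 'a option) \<Rightarrow> nat" where
  "hd \<pi> \<sigma> = card {x. \<pi> x \<noteq> \<sigma> x}"

text \<open>Contraction with distinguished element F = \<infinity> (None): the preimage of \<infinity> is sent to
  \<pi>(\<infinity>), \<infinity> is fixed, all other points as in \<pi>.\<close>
definition tri :: "('a option \<Rightarrow> 'a option) \<Rightarrow> 'a option \<Rightarrow> 'a option" where
  "tri \<pi> x = (if x = None then None else if \<pi> x = None then \<pi> None else \<pi> x)"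

definition CP_edge :: "('a::{field,finite} option \<Rightarrow> 'a option) \<Rightarrow> ('a option \<Rightarrow> 'a option) \<Rightarrow> bool" where
  "CP_edge \<pi> \<sigma> \<longleftrightarrow> \<pi> \<in> PGL2 \<and> \<sigma> \<in> PGL2 \<and> \<pi> \<noteq> \<sigma> \<and>
     int (hd (tri \<pi>) (tri \<sigma>)) = int (card (UNIV :: 'a set)) - 4"

end

theory Submission
  imports Defs "HOL-Computational_Algebra.Polynomial"
begin

text \<open>Write \<pi> = f_{K,r,i} and \<sigma> = f_{L,s,j}. Contraction changes a map only at \<infinity> and at the
  preimage of \<infinity>, so hd(\<pi>^\<triangle>, \<sigma>^\<triangle>) and hd(\<pi>, \<sigma>) can only differ through the points \<infinity>, i, j.
  Clearing denominators, \<pi> and \<sigma> agree at a finite point y iff y is a root of a nonzero polynomial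
  of degree at most 2 (at most 1 if K = L, when they also agree at \<infinity>), so distinct elements of P
  agree in at most two points and hd(\<pi>, \<sigma>) \<ge> q - 1.
  If i = j, contraction just exchanges the roles of \<infinity> and i, so hd is unchanged and \<pi>\<sigma> is
  not an edge. If i \<noteq> j, either condition forces K \<noteq> L and agreement of the contractions at
  both poles; then r = s = (K - L)(i - j), and the agreement polynomial becomes
  (K - L)((y - j)^2 - (i - j)(y - j) + (i - j)^2), whose discriminant -3(i - j)^2 is a square
  because q \<equiv> 1 (mod 3) provides a primitive cube root of unity. Hence \<pi> and \<sigma> agree in exactly
  two points, which is the edge condition.\<close>

lemma power_card_minus_one_eq_one:
  fixes a :: "'a::{field,finite}"
  assumes "a \<noteq> 0"
  shows "a ^ (CARD('a) - 1) = 1"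
proof -
  define U where "U = UNIV - {0::'a}"
  have "inj_on ((*) a) U"
    using assms by (auto simp: inj_on_def)
  moreover have "(*) a ` U = U"
  proof
    show "(*) a ` U \<subseteq> U"
      using assms by (auto simp: U_def)
    show "U \<subseteq> (*) a ` U"
    proof
      fix x assume "x \<in> U"
      then have "x = a * (x / a)" "x / a \<in> U"
        using assms by (auto simp: U_def)
      then show "x \<in> (*) a ` U" by blast
    qed
  qed
  ultimately have "\<Prod>U = prod ((*) a) U"
    using prod.reindex[of "(*) a" U id] by simp
  also have "\<dots> = a ^ card U * \<Prod>U"
    by (simp add: prod.distrib)
  finally have "a ^ card U = 1"
    by (simp add: U_def)
  then show ?thesis
    by (simp add: U_def card_Diff_singleton)
qed

lemma card_roots_of_unity_le:
  assumes "n > 0"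
  shows "card {x::'a::idom. x ^ n = 1} \<le> n"
proof -
  define P :: "'a poly" where "P = [:-1:] + monom 1 n"
  have "degree P = n"
    using assms unfolding P_def by (subst degree_add_eq_right) (auto simp: degree_monom_eq)
  with assms have "card {x. poly P x = 0} \<le> n"
    by (metis card_poly_roots_bound degree_0 less_irrefl)
  then show ?thesis
    by (simp add: P_def poly_monom add_eq_0_iff eq_commute[of "- 1"])
qed

lemma exists_primitive_cube_root_of_unity:
  assumes "CARD('a::{field,finite}) mod 3 = 1"
  obtains w :: "'a::{field,finite}" where "w ^ 3 = 1" "w \<noteq> 1"
proof -
  define n where "n = CARD('a) div 3"
  have "CARD('a) \<ge> 2"
    using card_mono[of UNIV "{0::'a, 1}"] by simp
  moreover have "n * 3 + CARD('a) mod 3 = CARD('a)"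
    unfolding n_def by (rule div_mult_mod_eq)
  ultimately have q: "CARD('a) - 1 = 3 * n" "n > 0"
    using assms by linarith+
  have "\<not> UNIV - {0::'a} \<subseteq> {x. x ^ n = 1}"
  proof
    assume "UNIV - {0::'a} \<subseteq> {x. x ^ n = 1}"
    then have "card (UNIV - {0::'a}) \<le> card {x::'a. x ^ n = 1}"
      by (intro card_mono) simp_all
    then have "CARD('a) - 1 \<le> n"
      using card_roots_of_unity_le[OF \<open>n > 0\<close>, where 'a='a] by (simp add: card_Diff_singleton)
    with q show False by linarith
  qed
  then obtain y :: 'a where "y \<noteq> 0" "y ^ n \<noteq> 1"
    by blast
  moreover have "(y ^ n) ^ 3 = 1"
    using power_card_minus_one_eq_one[OF \<open>y \<noteq> 0\<close>] q by (simp add: power_mult[symmetric] mult.commute)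
  ultimately show thesis
    using that by blast
qed

lemma card_add_card_Int_if_Diff_eq:
  assumes "finite A" "finite B" "A - S = B - S"
  shows "card A + card (B \<inter> S) = card B + card (A \<inter> S)"
  using card_Int_Diff[OF assms(1), of S] card_Int_Diff[OF assms(2), of S] assms(3) by simp

text \<open>(y - i)(y - j)(f_{K,r,i}(y) - f_{L,s,j}(y)), expanded in powers of y.\<close>
definition agreement_poly :: "'a::field \<Rightarrow> 'a \<Rightarrow> 'a \<Rightarrow> 'a \<Rightarrow> 'a \<Rightarrow> 'a \<Rightarrow> 'a poly" where
  "agreement_poly K r i L s j = [:(K - L) * i * j - r * j + s * i, r - s - (K - L) * (i + j), K - L:]"

lemma poly_agreement_poly:
  "poly (agreement_poly K r i L s j) y = (K - L) * (y - i) * (y - j) + r * (y - j) - s * (y - i)"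
  by (simp add: agreement_poly_def algebra_simps)

lemma fKri_eq_None_iff: "fKri K r i x = None \<longleftrightarrow> x = Some i"
  by (auto simp: fKri_def split: option.splits)

lemma fKri_Some_eq_iff:
  fixes K r i L s j y :: "'a::field"
  assumes "r \<noteq> 0" "s \<noteq> 0"
  shows "fKri K r i (Some y) = fKri L s j (Some y) \<longleftrightarrow> poly (agreement_poly K r i L s j) y = 0"
proof (cases "y = i \<or> y = j")
  case True
  then show ?thesis
    using assms by (auto simp: fKri_def poly_agreement_poly)
next
  case False
  then have "y - i \<noteq> 0" "y - j \<noteq> 0"
    by auto
  then have "(K + r / (y - i) - (L + s / (y - j))) * ((y - i) * (y - j))
      = poly (agreement_poly K r i L s j) y"
    by (simp add: poly_agreement_poly divide_simps) (simp add: algebra_simps)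
  with False \<open>y - i \<noteq> 0\<close> \<open>y - j \<noteq> 0\<close> show ?thesis
    by (auto simp: fKri_def)
qed

lemma agree_set_fKri:
  assumes "r \<noteq> 0" "s \<noteq> 0"
  shows "{x. fKri K r i x = fKri L s j x}
    = (if K = L then {None} else {}) \<union> Some ` {y. poly (agreement_poly K r i L s j) y = 0}"
proof (intro set_eqI)
  fix x
  show "x \<in> {x. fKri K r i x = fKri L s j x}
    \<longleftrightarrow> x \<in> (if K = L then {None} else {}) \<union> Some ` {y. poly (agreement_poly K r i L s j) y = 0}"
    by (cases x) (auto simp: fKri_Some_eq_iff[OF assms, symmetric] fKri_def[of _ _ _ None])
qed

lemma card_agree_fKri_le_two:
  fixes K r i L s j :: "'a::{field,finite}"
  assumes "r \<noteq> 0" "s \<noteq> 0" "fKri K r i \<noteq> fKri L s j"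
  shows "card {x. fKri K r i x = fKri L s j x} \<le> 2"
proof -
  let ?P = "agreement_poly K r i L s j"
  have "card {y. poly ?P y = 0} + of_bool (K = L) \<le> 2"
  proof (cases "K = L")
    case False
    then have "?P \<noteq> 0" "degree ?P \<le> 2"
      by (auto simp: agreement_poly_def)
    then show ?thesis
      using False card_poly_roots_bound[of ?P] by simp
  next
    case True
    then have P: "?P = [:s * i - r * j, r - s:]"
      by (simp add: agreement_poly_def algebra_simps)
    have "?P \<noteq> 0"
    proof
      assume "?P = 0"
      then have "r = s" "r * (i - j) = 0"
        unfolding P by (auto simp: algebra_simps)
      with True assms show False
        by simp
    qed
    moreover have "degree ?P \<le> 1"
      unfolding P by simp
    ultimately show ?thesis
      using True card_poly_roots_bound[of ?P] by simp
  qed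
  then show ?thesis
    unfolding agree_set_fKri[OF assms(1,2)] by (cases "K = L") (simp_all add: card_image)
qed

lemma hd_add_card_agree:
  fixes \<pi> \<sigma> :: "'a::finite option \<Rightarrow> 'a option"
  shows "hd \<pi> \<sigma> + card {x. \<pi> x = \<sigma> x} = CARD('a) + 1"
proof -
  have "hd \<pi> \<sigma> + card {x. \<pi> x = \<sigma> x} = card ({x. \<pi> x \<noteq> \<sigma> x} \<union> {x. \<pi> x = \<sigma> x})"
    unfolding hd_def by (rule card_Un_disjoint[symmetric]) auto
  also have "\<dots> = CARD('a option)"
    by (simp add: Un_def)
  finally show ?thesis
    by simp
qed

lemma tri_disagree_Diff:
  assumes "None \<in> S" "\<pi> -` {None} \<subseteq> S" "\<sigma> -` {None} \<subseteq> S"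
  shows "{x. tri \<pi> x \<noteq> tri \<sigma> x} - S = {x. \<pi> x \<noteq> \<sigma> x} - S"
proof -
  have "tri \<pi> x = \<pi> x" "tri \<sigma> x = \<sigma> x" if "x \<notin> S" for x
    using assms that by (auto simp: tri_def)
  then show ?thesis
    by auto
qed

lemma hd_tri_fKri_same_pole:
  fixes K r i L s :: "'a::{field,finite}"
  shows "hd (tri (fKri K r i)) (tri (fKri L s i)) = hd (fKri K r i) (fKri L s i)"
proof -
  let ?S = "{None, Some i}"
  have Diff: "{x. tri (fKri K r i) x \<noteq> tri (fKri L s i) x} - ?S = {x. fKri K r i x \<noteq> fKri L s i x} - ?S"
    by (rule tri_disagree_Diff) (auto simp: fKri_eq_None_iff)
  have "{x. tri (fKri K r i) x \<noteq> tri (fKri L s i) x} \<inter> ?S = (if K = L then {} else {Some i})"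
    by (auto simp: tri_def fKri_def)
  moreover have "{x. fKri K r i x \<noteq> fKri L s i x} \<inter> ?S = (if K = L then {} else {None})"
    by (auto simp: fKri_def)
  ultimately show ?thesis
    using card_add_card_Int_if_Diff_eq[OF finite finite Diff] unfolding hd_def by (simp split: if_splits)
qed

lemma hd_tri_fKri_distinct_poles:
  fixes K r i L s j :: "'a::{field,finite}"
  assumes "i \<noteq> j"
  shows "hd (tri (fKri K r i)) (tri (fKri L s j)) + of_bool (K \<noteq> L) + 2
    = hd (fKri K r i) (fKri L s j) + of_bool (K \<noteq> L + s / (i - j)) + of_bool (K + r / (j - i) \<noteq> L)"
proof -
  let ?S = "{None, Some i, Some j}"
  have Diff: "{x. tri (fKri K r i) x \<noteq> tri (fKri L s j) x} - ?S = {x. fKri K r i x \<noteq> fKri L s j x} - ?S"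
    by (rule tri_disagree_Diff) (auto simp: fKri_eq_None_iff)
  have "card ({x. tri (fKri K r i) x \<noteq> tri (fKri L s j) x} \<inter> ?S)
      = of_bool (K \<noteq> L + s / (i - j)) + of_bool (K + r / (j - i) \<noteq> L)"
  proof -
    have "{x. tri (fKri K r i) x \<noteq> tri (fKri L s j) x} \<inter> ?S
        = (if K = L + s / (i - j) then {} else {Some i}) \<union> (if K + r / (j - i) = L then {} else {Some j})"
      using assms by (auto simp: tri_def fKri_def)
    then show ?thesis
      using assms by (simp add: card_Un_disjoint)
  qed
  moreover have "card ({x. fKri K r i x \<noteq> fKri L s j x} \<inter> ?S) = of_bool (K \<noteq> L) + 2"
  proof -
    have "{x. fKri K r i x \<noteq> fKri L s j x} \<inter> ?S = (if K = L then {} else {None}) \<union> {Some i, Some j}"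
      using assms by (auto simp: fKri_def)
    then show ?thesis
      using assms by (simp add: card_Un_disjoint)
  qed
  ultimately show ?thesis
    using card_add_card_Int_if_Diff_eq[OF finite finite Diff] unfolding hd_def by simp
qed

lemma card_agree_fKri_eq_two:
  fixes K r i L s j :: "'a::{field,finite}"
  assumes "CARD('a) mod 3 = 1" "i \<noteq> j" "K \<noteq> L"
    and "K = L + s / (i - j)" "K + r / (j - i) = L"
  shows "card {x. fKri K r i x = fKri L s j x} = 2"
proof -
  obtain w :: 'a where w: "w ^ 3 = 1" "w \<noteq> 1"
    using exists_primitive_cube_root_of_unity[OF assms(1)] by blast
  have "(w - 1) * (w^2 + w + 1) = 0"
    using w by (simp add: algebra_simps power2_eq_square power3_eq_cube)
  with w have w2: "w^2 + w + 1 = 0"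
    by simp
  define d where "d = K - L"
  define t where "t = i - j"
  have "d \<noteq> 0" "t \<noteq> 0"
    using assms(2,3) by (auto simp: d_def t_def)
  have "s = d * t" "r = d * t"
    using assms(2,4,5) by (auto simp: d_def t_def field_simps)
  then have "r \<noteq> 0" "s \<noteq> 0"
    using \<open>d \<noteq> 0\<close> \<open>t \<noteq> 0\<close> by simp_all
  txt \<open>The discriminant -3t^2 of the quadratic factor is (t(1 + 2w))^2.\<close>
  have "poly (agreement_poly K r i L s j) y = d * ((y - (j - t * w)) * (y - (j + t * (1 + w))))" for y
  proof -
    have "poly (agreement_poly K r i L s j) y = d * ((y - j)^2 - t * (y - j) + t^2)"
      unfolding poly_agreement_poly \<open>r = d * t\<close> \<open>s = d * t\<close> d_def t_def
      by (simp add: algebra_simps power2_eq_square)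
    also have "(y - j)^2 - t * (y - j) + t^2 = (y - (j - t * w)) * (y - (j + t * (1 + w))) + t^2 * (w^2 + w + 1)"
      by (simp add: algebra_simps power2_eq_square)
    finally show ?thesis
      using w2 by simp
  qed
  then have roots: "{y. poly (agreement_poly K r i L s j) y = 0} = {j - t * w, j + t * (1 + w)}"
    using \<open>d \<noteq> 0\<close> by auto
  have "j - t * w \<noteq> j + t * (1 + w)"
  proof
    assume "j - t * w = j + t * (1 + w)"
    then have "t * (1 + 2 * w) = 0"
      by (simp add: algebra_simps)
    with \<open>t \<noteq> 0\<close> have "1 + 2 * w = 0"
      by simp
    have "w * (w - 1) = (w^2 + w + 1) - (1 + 2 * w)"
      by (simp add: algebra_simps power2_eq_square)
    with w2 \<open>1 + 2 * w = 0\<close> have "w * (w - 1) = 0"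
      by simp
    with w show False
      by auto
  qed
  then show ?thesis
    unfolding agree_set_fKri[OF \<open>r \<noteq> 0\<close> \<open>s \<noteq> 0\<close>] roots using assms(3) by (simp add: card_image)
qed

lemma fKri_in_PGL2:
  fixes K r i :: "'a::field"
  assumes "r \<noteq> 0"
  shows "fKri K r i \<in> PGL2"
proof -
  have "fKri K r i x = mobius K (r - K * i) 1 (- i) x" for x
  proof (cases x)
    case (Some y)
    then show ?thesis
      by (cases "y = i") (auto simp: fKri_def mobius_def field_simps)
  qed (simp add: fKri_def mobius_def)
  moreover have "K * (- i) \<noteq> (r - K * i) * 1"
    using assms by simp
  ultimately show ?thesis
    unfolding PGL2_def by blast
qed

theorem lemma11:
  fixes \<pi> \<sigma> :: "'a::{field,finite} option \<Rightarrow> 'a option"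
    and p m :: nat
  assumes "prime p" and "odd p" and "CARD('a) = p ^ m"
    and "CARD('a) mod 3 = 1" and "CARD('a) \<ge> 13"
    and "\<pi> \<in> Pset" and "\<sigma> \<in> Pset"
  shows "int (hd (tri \<pi>) (tri \<sigma>)) = int (hd \<pi> \<sigma>) - 3 \<longleftrightarrow> CP_edge \<pi> \<sigma>"
proof (cases "\<pi> = \<sigma>")
  case True
  then show ?thesis
    by (simp add: CP_edge_def hd_def)
next
  case False
  obtain K r i where \<pi>: "\<pi> = fKri K r i" "r \<noteq> 0"
    using assms(6) unfolding Pset_def by blast
  obtain L s j where \<sigma>: "\<sigma> = fKri L s j" "s \<noteq> 0"
    using assms(7) unfolding Pset_def by blast
  have edge: "CP_edge \<pi> \<sigma> \<longleftrightarrow> int (hd (tri \<pi>) (tri \<sigma>)) = int CARD('a) - 4"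
    using False \<pi> \<sigma> fKri_in_PGL2 unfolding CP_edge_def by auto
  have hd_agree: "hd \<pi> \<sigma> + card {x. \<pi> x = \<sigma> x} = CARD('a) + 1"
    by (rule hd_add_card_agree)
  have "card {x. \<pi> x = \<sigma> x} \<le> 2"
    using card_agree_fKri_le_two False \<pi> \<sigma> by simp
  show ?thesis
  proof (cases "i = j")
    case True
    then have "hd (tri \<pi>) (tri \<sigma>) = hd \<pi> \<sigma>"
      using \<pi> \<sigma> hd_tri_fKri_same_pole by simp
    then show ?thesis
      unfolding edge using hd_agree \<open>card {x. \<pi> x = \<sigma> x} \<le> 2\<close> by linarith
  next
    case False
    have "hd (tri \<pi>) (tri \<sigma>) + of_bool (K \<noteq> L) + 2
        = hd \<pi> \<sigma> + of_bool (K \<noteq> L + s / (i - j)) + of_bool (K + r / (j - i) \<noteq> L)"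
      using hd_tri_fKri_distinct_poles[OF False] \<pi> \<sigma> by simp
    moreover have "card {x. \<pi> x = \<sigma> x} = 2" if "K \<noteq> L" "K = L + s / (i - j)" "K + r / (j - i) = L"
      using card_agree_fKri_eq_two[OF assms(4) False that] \<pi> \<sigma> by simp
    ultimately show ?thesis
      unfolding edge using hd_agree \<open>card {x. \<pi> x = \<sigma> x} \<le> 2\<close> by (auto simp: of_bool_def split: if_splits)
  qed
qed

end
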